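(* Let $\mathcal{Y}=\{0,1\}$, let $\mathcal{X},\Phi$ be the natural feature construction, and for $n\in\mathbb{N}$ let $T_n=(f_n,\psi_n)$ where $\psi_n(x,x')=f_n$ if $f_n(x)=1,f_n(x')=0$; $\psi_n(x,x')=\neg f_n$ if $f_n(x)=0,f_n(x')=1$; and $\psi_n(x,x')=\bot$ otherwise. Let $\mathcal{T}=\{T_n:n\in\mathbb{N}\}$ and $H=\{(\bar 0,0),(\bar 1,1)\}$. Then $\mathrm{DFFdim}(\mathcal{T},H)=1$, while $\mathrm{Ldim}(\mathrm{DtO}(\mathcal{T},H))=\infty$; moreover there is a Littlestone tree of infinite depth shattered by $\mathrm{DtO}(\mathcal{T},H)$.
   Context: Setting. A teacher over $\mathcal{X},\mathcal{Y},\Phi$ ($\mathcal{Y}$ finite, $\Phi$ a set of Boolean features on $\mathcal{X}$, $\bot$ a null symbol) is a pair $T=(\ell,\psi)$ with $\ell:\mathcal{X}\to\mathcal{Y}$ and $\psi:\mathcal{X}\times\mathcal{X}\to\Phi\cup\{\bot\}$ such that whenever $\ell(x)\neq\ell(\hat x)$, $\phi:=\psi(x,\hat x)\in\Phi$, $\phi(x)=1$ and $\phi(\hat x)=0$. A teacher class is a set of teachers. A history is a non-empty set $H\subseteq\mathcal{X}\times\mathcal{Y}$, $H_{\mathcal{X}}=\{x:\exists y,(x,y)\in H\}$; a teacher $(\ell,\psi)$ is consistent with $H$ if $\ell(x)=y$ for all $(x,y)\in H$; $\mathcal{T}_H$ is the set of teachers in $\mathcal{T}$ consistent with $H$. DFF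 dimension. A DFF tree is a rooted tree whose nodes are triples $\langle y,\phi,x\rangle$ with $y\in\mathcal{Y}\cup\{\bot\}$, $\phi\in\Phi\cup\{\bot\}$, $x\in\mathcal{X}\cup\{\bot\}$, such that the root has $y=\phi=\bot$, a node has $x=\bot$ iff it is a leaf, every edge is labeled by a pair $(\hat x,\hat y)\in\mathcal{X}\times\mathcal{Y}$, and every non-root node $\langle y,\phi,x\rangle$ with incoming edge $(\hat x,\hat y)$ has $\phi\neq\bot$ whenever $y\neq\hat y$. For a parent–child pair $\langle\cdot,\cdot,x\rangle\xrightarrow{(\hat x,\hat y)}\langle y,\phi,\cdot\rangle$ on a path, $(x,y)$ is called a labeled example in that path. A path from the root is consistent with a teacher $(\ell,\psi)$ if for every such parent–child pair on it, $\ell(x)=y$ and, if $y\neq\hat y$, $\psi(x,\hat x)=\phi$. Given $\mathcal{T}$ consistent with $H$, a DFF tree is shattered by $\mathcal{T}$ and $H$ if: (1) every non-root node $\langle y,\phi,x\rangle$ with incoming edge $(\hat x,\hat y)$ has $y\neq\hat y$; (2) the labels of the outgoing edges of each non-leaf node $v$ are exactly the pairs that belong to $H$ or are labeled examples in the path from the root to $v$; (3) every root-to-leaf path is consistent with some teacher in $\mathcal{T}_H$; (4) all root-to-leaf paths have the same number of edges, called the height. $\mathrm{DFFdim}(\mathcal{T},H)$ is the maximal height of a DFF tree shattered by $\mathcal{T}$ and $H$. Natural feature construction: $\mathcal{X}=\{0,1\}^{\mathbb{N}}$, $f_n(x)=x(n)$, $\Phi=\bigcup_{n\in\mathbb{N}}\{f_n,\neg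 f_n\}$ with $\neg f_n=1-f_n$; $\bar 0,\bar 1$ are the all-zero and all-one vectors. $\mathrm{Ldim}$ is the Littlestone dimension: the maximal depth of a complete binary tree whose internal nodes are labeled by examples and whose two outgoing edges at each internal node are labeled by two distinct labels, such that for every root-to-leaf path some function in the class agrees with all (example, edge label) pairs on the path; an infinite-depth tree is shattered if every finite path from the root is realized by some function in the class. Mapping DtO: given $\mathcal{T}$ and $H$, let $\mathcal{X}''=\mathcal{X}\setminus H_{\mathcal{X}}$; then $\mathrm{DtO}(\mathcal{T},H)=\{\ell|_{\mathcal{X}''}:(\ell,\psi)\in\mathcal{T}\}$. *)

theory Defs
  imports Main "HOL-Library.Extended_Nat"
begin

text \<open>Instances have type 'x, labels type 'y (Y = UNIV :: 'y set), Boolean features on 'x are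
  predicates 'x => bool; the null symbol bottom is None.\<close>

type_synonym ('x,'y) teacher = "('x \<Rightarrow> 'y) \<times> ('x \<Rightarrow> 'x \<Rightarrow> ('x \<Rightarrow> bool) option)"

definition is_teacher :: "('x \<Rightarrow> bool) set \<Rightarrow> ('x,'y) teacher \<Rightarrow> bool" where
  "is_teacher Phi T \<longleftrightarrow> (case T of (l, psi) \<Rightarrow>
     (\<forall>x x'. psi x x' \<in> Some ` Phi \<union> {None}) \<and>
     (\<forall>x x'. l x \<noteq> l x' \<longrightarrow> (\<exists>\<phi>. psi x x' = Some \<phi> \<and> \<phi> \<in> Phi \<and> \<phi> x \<and> \<not> \<phi> x')))"

definition hist_X :: "('x \<times> 'y) set \<Rightarrow> 'x set" where
  "hist_X H = {x. \<exists>y. (x, y) \<in> H}"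

definition consistent_with :: "('x \<times> 'y) set \<Rightarrow> ('x,'y) teacher \<Rightarrow> bool" where
  "consistent_with H T \<longleftrightarrow> (\<forall>(x, y) \<in> H. fst T x = y)"

definition teachers_H :: "('x,'y) teacher set \<Rightarrow> ('x \<times> 'y) set \<Rightarrow> ('x,'y) teacher set" where
  "teachers_H TT H = {T \<in> TT. consistent_with H T}"

text \<open>A node carries the triple (y, phi, x) (each possibly bottom = None) and a map from edge labels
  (x^, y^) in X \<times> Y to the (optional) child reached by the edge with that label.\<close>

datatype ('x,'y) dfft =
  DNode (nY: "'y option") (nPhi: "('x \<Rightarrow> bool) option") (nX: "'x option")
        (nCh: "'x \<times> 'y \<Rightarrow> ('x,'y) dfft option")

definition is_leaf :: "('x,'y) dfft \<Rightarrow> bool" where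
  "is_leaf v \<longleftrightarrow> (\<forall>l. nCh v l = None)"

text \<open>Root-to-leaf paths, as the list of (edge label, child node) steps.\<close>

inductive is_path :: "('x,'y) dfft \<Rightarrow> (('x \<times> 'y) \<times> ('x,'y) dfft) list \<Rightarrow> bool" where
  leaf: "is_leaf v \<Longrightarrow> is_path v []"
| step: "nCh v l = Some c \<Longrightarrow> is_path c p \<Longrightarrow> is_path v ((l, c) # p)"

text \<open>Nodes on a path starting at v (v itself is node 0).\<close>

definition path_nodes :: "('x,'y) dfft \<Rightarrow> (('x \<times> 'y) \<times> ('x,'y) dfft) list \<Rightarrow> ('x,'y) dfft list" where
  "path_nodes v p = v # map snd p"

text \<open>Labeled examples (x, y) of a path starting at v: x from the parent, y from the child.\<close>

fun lab_ex :: "('x,'y) dfft \<Rightarrow> (('x \<times> 'y) \<times> ('x,'y) dfft) list \<Rightarrow> ('x \<times> 'y option) set" where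
  "lab_ex v [] = {}"
| "lab_ex v ((l, c) # p) = {(x, nY c) | x. nX v = Some x} \<union> lab_ex c p"

fun path_consistent :: "('x,'y) teacher \<Rightarrow> ('x,'y) dfft \<Rightarrow> (('x \<times> 'y) \<times> ('x,'y) dfft) list \<Rightarrow> bool" where
  "path_consistent T v [] = True"
| "path_consistent T v ((l, c) # p) =
     ((\<forall>x. nX v = Some x \<longrightarrow>
          nY c = Some (fst T x) \<and> (nY c \<noteq> Some (snd l) \<longrightarrow> snd T x (fst l) = nPhi c))
      \<and> path_consistent T c p)"

text \<open>Well-formedness of a DFF tree with root r over feature set Phi (every node lies on some
  root-to-leaf path, since trees of the datatype are finite).\<close>

definition dff_tree :: "('x \<Rightarrow> bool) set \<Rightarrow> ('x,'y) dfft \<Rightarrow> bool" where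
  "dff_tree Phi r \<longleftrightarrow> nY r = None \<and> nPhi r = None \<and>
    (\<forall>p. is_path r p \<longrightarrow>
       (\<forall>v \<in> set (path_nodes r p). (nX v = None \<longleftrightarrow> is_leaf v) \<and> nPhi v \<in> Some ` Phi \<union> {None}) \<and>
       (\<forall>(l, c) \<in> set p. nY c \<noteq> Some (snd l) \<longrightarrow> nPhi c \<noteq> None))"

definition dff_shattered ::
  "('x \<Rightarrow> bool) set \<Rightarrow> ('x,'y) teacher set \<Rightarrow> ('x \<times> 'y) set \<Rightarrow> ('x,'y) dfft \<Rightarrow> nat \<Rightarrow> bool" where
  "dff_shattered Phi TT H r n \<longleftrightarrow> dff_tree Phi r \<and>
    (\<forall>p. is_path r p \<longrightarrow>
       \<comment> \<open>(1)\<close>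
       (\<forall>(l, c) \<in> set p. nY c \<noteq> Some (snd l)) \<and>
       \<comment> \<open>(2)\<close>
       (\<forall>k < length p. {l. nCh (path_nodes r p ! k) l \<noteq> None}
            = H \<union> {(x, y). (x, Some y) \<in> lab_ex r (take k p)}) \<and>
       \<comment> \<open>(3)\<close>
       (\<exists>T \<in> teachers_H TT H. path_consistent T r p) \<and>
       \<comment> \<open>(4)\<close>
       length p = n)"

definition DFFdim :: "('x \<Rightarrow> bool) set \<Rightarrow> ('x,'y) teacher set \<Rightarrow> ('x \<times> 'y) set \<Rightarrow> enat" where
  "DFFdim Phi TT H = Sup {enat n | n. \<exists>r. dff_shattered Phi TT H r n}"

text \<open>Hypotheses are partial functions (maps) 'x \<rightharpoonup> 'y; h agrees with (x,y) iff h x = Some y.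
  A (binary) Littlestone tree assigns to each node, addressed by the list of edge choices from the
  root (False = first edge, True = second edge), an example x and two distinct edge labels.\<close>

type_synonym ('x,'y) ltree = "bool list \<Rightarrow> 'x \<times> 'y \<times> 'y"

definition ledge :: "('x,'y) ltree \<Rightarrow> bool list \<Rightarrow> bool \<Rightarrow> 'y" where
  "ledge t a b = (if b then snd (snd (t a)) else fst (snd (t a)))"

definition realizes_branch :: "('x \<rightharpoonup> 'y) \<Rightarrow> ('x,'y) ltree \<Rightarrow> bool list \<Rightarrow> bool" where
  "realizes_branch h t bs \<longleftrightarrow>
     (\<forall>i < length bs. h (fst (t (take i bs))) = Some (ledge t (take i bs) (bs ! i)))"

definition ltree_shattered :: "('x \<rightharpoonup> 'y) set \<Rightarrow> ('x,'y) ltree \<Rightarrow> nat \<Rightarrow> bool" where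
  "ltree_shattered C t d \<longleftrightarrow>
     (\<forall>a. length a < d \<longrightarrow> fst (snd (t a)) \<noteq> snd (snd (t a))) \<and>
     (\<forall>bs. length bs = d \<longrightarrow> (\<exists>h \<in> C. realizes_branch h t bs))"

definition ltree_shattered_inf :: "('x \<rightharpoonup> 'y) set \<Rightarrow> ('x,'y) ltree \<Rightarrow> bool" where
  "ltree_shattered_inf C t \<longleftrightarrow>
     (\<forall>a. fst (snd (t a)) \<noteq> snd (snd (t a))) \<and>
     (\<forall>bs. \<exists>h \<in> C. realizes_branch h t bs)"

definition Ldim :: "('x \<rightharpoonup> 'y) set \<Rightarrow> enat" where
  "Ldim C = Sup {enat d | d. \<exists>t. ltree_shattered C t d}"

definition DtO :: "('x,'y) teacher set \<Rightarrow> ('x \<times> 'y) set \<Rightarrow> ('x \<rightharpoonup> 'y) set" where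
  "DtO TT H = {(Some \<circ> l) |` (UNIV - hist_X H) | l psi. (l, psi) \<in> TT}"

section \<open>Natural feature construction (X = {0,1}^N as nat => bool, 0/1 as False/True)\<close>

definition feat :: "nat \<Rightarrow> (nat \<Rightarrow> bool) \<Rightarrow> bool" where
  "feat n = (\<lambda>x. x n)"

definition nfeat :: "nat \<Rightarrow> (nat \<Rightarrow> bool) \<Rightarrow> bool" where
  "nfeat n = (\<lambda>x. \<not> x n)"

definition natPhi :: "((nat \<Rightarrow> bool) \<Rightarrow> bool) set" where
  "natPhi = range feat \<union> range nfeat"

definition zero_vec :: "nat \<Rightarrow> bool" where "zero_vec = (\<lambda>_. False)"
definition one_vec :: "nat \<Rightarrow> bool" where "one_vec = (\<lambda>_. True)"

definition psi_n :: "nat \<Rightarrow> (nat \<Rightarrow> bool) \<Rightarrow> (nat \<Rightarrow> bool) \<Rightarrow> ((nat \<Rightarrow> bool) \<Rightarrow> bool) option" where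
  "psi_n n x x' = (if feat n x \<and> \<not> feat n x' then Some (feat n)
                   else if \<not> feat n x \<and> feat n x' then Some (nfeat n) else None)"

definition T_n :: "nat \<Rightarrow> (nat \<Rightarrow> bool, bool) teacher" where
  "T_n n = (feat n, psi_n n)"

end

theory Submission
  imports Defs
begin

(* A DFF tree of height two would have to continue the root edge (0,0) by both history edges
   (0,0) and (1,1). The child c of the root carries a single feature, which is f_a for every
   teacher T_a explaining a branch through c; as n \<mapsto> f_n is injective, one teacher explains both
   continuations, yet they demand opposite labels for the instance at c. A height-one tree exists
   since a root instance with a 1 and a 0 coordinate disagrees with some T_n on each history example.
   Off the history, DtO contains every projection f_m, and the instances x_k with x_k(m) the k-th
   binary digit of m are shattered by these projections to every depth. *)

lemma is_path_exists: "\<exists>p. is_path v p"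
proof (induction v)
  case (DNode y \<phi> x ch)
  show ?case
  proof (cases "is_leaf (DNode y \<phi> x ch)")
    case True
    then show ?thesis by (blast intro: is_path.leaf)
  next
    case False
    then obtain l c where "ch l = Some c" by (auto simp: is_leaf_def)
    moreover from this obtain p where "is_path c p"
      using DNode.IH by (metis option.set_intros rangeI)
    ultimately show ?thesis by (metis dfft.sel(4) is_path.step)
  qed
qed

lemma is_path_Cons_exists:
  assumes "nCh v l = Some c"
  obtains q where "is_path v ((l, c) # q)"
  using assms is_path_exists is_path.step by metis

lemma is_path_leaf_Nil: "is_path v p \<Longrightarrow> is_leaf v \<Longrightarrow> p = []"
  by (cases rule: is_path.cases) (auto simp: is_leaf_def)

lemma dff_tree_inner_node_nX:
  assumes "dff_tree Phi r" "is_path r p" "v \<in> set (path_nodes r p)" "\<not> is_leaf v"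
  shows "nX v \<noteq> None"
  using assms unfolding dff_tree_def by blast

lemma dff_shattered_pathD:
  assumes "dff_shattered Phi TT H r n" and "is_path r p"
  shows dff_shattered_path_nY_neq_edge: "\<And>l c. (l, c) \<in> set p \<Longrightarrow> nY c \<noteq> Some (snd l)"
    and dff_shattered_path_edges: "\<And>k. k < length p \<Longrightarrow>
      {l. nCh (path_nodes r p ! k) l \<noteq> None} = H \<union> {(x, y). (x, Some y) \<in> lab_ex r (take k p)}"
    and dff_shattered_path_teacher: "\<exists>T \<in> teachers_H TT H. path_consistent T r p"
    and dff_shattered_path_length: "length p = n"
  using assms unfolding dff_shattered_def by fast+

lemma dff_shattered_two_levels:
  assumes sh: "dff_shattered Phi TT H r n" and "2 \<le> n" and "l\<^sub>0 \<in> H"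
  obtains x c x' where "nX r = Some x" "nCh r l\<^sub>0 = Some c" "nX c = Some x'"
    and "\<And>l\<^sub>1. l\<^sub>1 \<in> H \<Longrightarrow> \<exists>d q. is_path r ((l\<^sub>0, c) # (l\<^sub>1, d) # q)"
proof -
  have tree: "dff_tree Phi r" using sh by (simp add: dff_shattered_def)
  note edges = dff_shattered_path_edges[OF sh] and len = dff_shattered_path_length[OF sh]
  obtain p where p: "is_path r p" using is_path_exists by blast
  with len \<open>2 \<le> n\<close> have "0 < length p" by auto
  from edges[OF p this] have "{l. nCh r l \<noteq> None} = H" by (simp add: path_nodes_def)
  with \<open>l\<^sub>0 \<in> H\<close> obtain c where c: "nCh r l\<^sub>0 = Some c" by auto
  then obtain q where q: "is_path r ((l\<^sub>0, c) # q)" by (rule is_path_Cons_exists)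
  with len \<open>2 \<le> n\<close> have "q \<noteq> []" by fastforce
  from q have "is_path c q" by (cases rule: is_path.cases) auto
  with \<open>q \<noteq> []\<close> have "\<not> is_leaf c" using is_path_leaf_Nil by blast
  then obtain x' where x': "nX c = Some x'"
    using dff_tree_inner_node_nX[OF tree q] by (auto simp: path_nodes_def)
  from p \<open>0 < length p\<close> have "\<not> is_leaf r" using is_path_leaf_Nil by blast
  then obtain x where x: "nX r = Some x"
    using dff_tree_inner_node_nX[OF tree p] by (auto simp: path_nodes_def)
  have "1 < length ((l\<^sub>0, c) # q)" using \<open>q \<noteq> []\<close> by simp
  from edges[OF q this] have "H \<subseteq> {l. nCh c l \<noteq> None}" by (auto simp: path_nodes_def)
  have "\<exists>d q. is_path r ((l\<^sub>0, c) # (l\<^sub>1, d) # q)" if "l\<^sub>1 \<in> H" for l\<^sub>1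
  proof -
    from that \<open>H \<subseteq> _\<close> obtain d where "nCh c l\<^sub>1 = Some d" by auto
    then obtain q' where "is_path c ((l\<^sub>1, d) # q')" by (rule is_path_Cons_exists)
    with c show ?thesis by (blast intro: is_path.step)
  qed
  with x c x' that show ?thesis by blast
qed

lemma dff_shattered_two_step_teacher:
  assumes sh: "dff_shattered Phi TT H r n"
    and p: "is_path r ((l\<^sub>0, c) # (l\<^sub>1, d) # q)"
    and x: "nX r = Some x" and x': "nX c = Some x'"
  obtains lab \<psi> where "(lab, \<psi>) \<in> teachers_H TT H"
    and "lab x \<noteq> snd l\<^sub>0" "nPhi c = \<psi> x (fst l\<^sub>0)" "lab x' \<noteq> snd l\<^sub>1"
proof -
  have "nY c \<noteq> Some (snd l\<^sub>0)" "nY d \<noteq> Some (snd l\<^sub>1)"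
    using dff_shattered_path_nY_neq_edge[OF sh p] by simp_all
  moreover obtain T where "T \<in> teachers_H TT H" "path_consistent T r ((l\<^sub>0, c) # (l\<^sub>1, d) # q)"
    using dff_shattered_path_teacher[OF sh p] by blast
  ultimately show ?thesis
    using x x' that[of "fst T" "snd T"] by auto
qed

definition teacher_leaf :: "'x \<Rightarrow> ('x,'y) teacher \<Rightarrow> 'x \<Rightarrow> ('x,'y) dfft" where
  "teacher_leaf x T x' = DNode (Some (fst T x)) (snd T x x') None Map.empty"

definition dfft_height_one :: "'x \<Rightarrow> ('x \<times> 'y) set \<Rightarrow> ('x \<times> 'y \<Rightarrow> ('x,'y) teacher) \<Rightarrow> ('x,'y) dfft" where
  "dfft_height_one x H T =
     DNode None None (Some x) (\<lambda>l. if l \<in> H then Some (teacher_leaf x (T l) (fst l)) else None)"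

lemma teacher_leaf_sel [simp]:
  "nY (teacher_leaf x T x') = Some (fst T x)" "nPhi (teacher_leaf x T x') = snd T x x'"
  "nX (teacher_leaf x T x') = None"
  by (simp_all add: teacher_leaf_def)

lemma dfft_height_one_sel [simp]:
  "nY (dfft_height_one x H T) = None" "nPhi (dfft_height_one x H T) = None"
  "nX (dfft_height_one x H T) = Some x"
  by (simp_all add: dfft_height_one_def)

lemma is_leaf_teacher_leaf: "is_leaf (teacher_leaf x T x')"
  by (simp add: is_leaf_def teacher_leaf_def)

lemma nCh_dfft_height_one:
  "nCh (dfft_height_one x H T) l = (if l \<in> H then Some (teacher_leaf x (T l) (fst l)) else None)"
  by (simp add: dfft_height_one_def)

lemma is_leaf_dfft_height_one: "is_leaf (dfft_height_one x H T) \<longleftrightarrow> H = {}"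
  by (auto simp: is_leaf_def nCh_dfft_height_one)

lemma is_path_dfft_height_one:
  assumes "H \<noteq> {}"
  shows "is_path (dfft_height_one x H T) p \<longleftrightarrow> (\<exists>l \<in> H. p = [(l, teacher_leaf x (T l) (fst l))])"
proof
  assume "is_path (dfft_height_one x H T) p"
  then show "\<exists>l \<in> H. p = [(l, teacher_leaf x (T l) (fst l))]"
  proof cases
    case leaf
    with assms show ?thesis by (simp add: is_leaf_dfft_height_one)
  next
    case (step l c q)
    have "l \<in> H" and c: "c = teacher_leaf x (T l) (fst l)"
      using step(2) unfolding nCh_dfft_height_one by (simp_all split: if_splits)
    moreover have "q = []"
      using step(3) unfolding c by (rule is_path_leaf_Nil) (rule is_leaf_teacher_leaf)
    ultimately show ?thesis using step(1) by blast
  qed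
next
  assume "\<exists>l \<in> H. p = [(l, teacher_leaf x (T l) (fst l))]"
  then obtain l where "l \<in> H" and p: "p = [(l, teacher_leaf x (T l) (fst l))]" by blast
  then have "nCh (dfft_height_one x H T) l = Some (teacher_leaf x (T l) (fst l))"
    by (simp add: nCh_dfft_height_one)
  then show "is_path (dfft_height_one x H T) p"
    unfolding p by (rule is_path.step) (rule is_path.leaf, rule is_leaf_teacher_leaf)
qed

lemma is_teacher_feature:
  assumes "is_teacher Phi (lab, \<psi>)" and "lab x \<noteq> lab x'"
  obtains \<phi> where "\<psi> x x' = Some \<phi>" "\<phi> \<in> Phi" "\<phi> x" "\<not> \<phi> x'"
  using assms unfolding is_teacher_def by blast

lemma dff_shattered_dfft_height_one:
  assumes "H \<noteq> {}"
    and teachers: "\<And>l. l \<in> H \<Longrightarrow> T l \<in> teachers_H TT H \<and> is_teacher Phi (T l)"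
    and disagree: "\<And>l. l \<in> H \<Longrightarrow> fst (T l) x \<noteq> snd l"
  shows "dff_shattered Phi TT H (dfft_height_one x H T) 1"
proof -
  define r where "r = dfft_height_one x H T"
  define c where "c l = teacher_leaf x (T l) (fst l)" for l
  have paths: "is_path r p \<longleftrightarrow> (\<exists>l \<in> H. p = [(l, c l)])" for p
    unfolding r_def c_def using \<open>H \<noteq> {}\<close> by (rule is_path_dfft_height_one)
  have feature: "\<exists>\<phi> \<in> Phi. nPhi (c l) = Some \<phi>" if "l \<in> H" for l
  proof -
    obtain lab \<psi> where T: "T l = (lab, \<psi>)" by fastforce
    with teachers[OF that] have "is_teacher Phi (lab, \<psi>)" and "lab (fst l) = snd l"
      using that by (auto simp: teachers_H_def consistent_with_def)
    with disagree[OF that] T obtain \<phi> where "\<psi> x (fst l) = Some \<phi>" "\<phi> \<in> Phi"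
      by (metis fst_conv is_teacher_feature)
    then show ?thesis by (simp add: c_def T)
  qed
  have "\<not> is_leaf r" "is_leaf (c l)" for l
    using \<open>H \<noteq> {}\<close> by (simp_all add: r_def c_def is_leaf_dfft_height_one is_leaf_teacher_leaf)
  with feature have tree: "dff_tree Phi r"
    unfolding dff_tree_def paths by (fastforce simp: r_def c_def path_nodes_def)
  have edges: "{l. nCh r l \<noteq> None} = H"
    by (simp add: r_def nCh_dfft_height_one)
  have consistent: "path_consistent (T l) r [(l, c l)]" for l
    by (simp add: r_def c_def)
  show ?thesis
    unfolding dff_shattered_def r_def[symmetric]
  proof (intro conjI tree allI impI)
    fix p assume "is_path r p"
    then obtain l where l: "l \<in> H" and p: "p = [(l, c l)]" unfolding paths by blast
    show "\<forall>(l, c) \<in> set p. nY c \<noteq> Some (snd l)"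
      using disagree[OF l] by (simp add: p c_def)
    show "{l. nCh (path_nodes r p ! k) l \<noteq> None} = H \<union> {(x, y). (x, Some y) \<in> lab_ex r (take k p)}"
      if "k < length p" for k
      using that edges by (simp add: p path_nodes_def)
    show "\<exists>T \<in> teachers_H TT H. path_consistent T r p"
      using teachers[OF l] consistent p by blast
    show "length p = 1" by (simp add: p)
  qed
qed

lemma DFFdim_eq_enatI:
  assumes "dff_shattered Phi TT H r n" and "\<And>r m. dff_shattered Phi TT H r m \<Longrightarrow> m \<le> n"
  shows "DFFdim Phi TT H = enat n"
  unfolding DFFdim_def using assms by (intro Sup_eqI) (auto, blast)

lemma Ldim_eq_infinityI:
  assumes "ltree_shattered_inf C t"
  shows "Ldim C = \<infinity>"
proof -
  from assms have "ltree_shattered C t d" for d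
    unfolding ltree_shattered_inf_def ltree_shattered_def by blast
  then have "{enat d | d. \<exists>t. ltree_shattered C t d} = range enat" by blast
  moreover have "infinite (range enat)" by (simp add: finite_image_iff inj_on_def)
  ultimately show ?thesis by (simp add: Ldim_def Sup_enat_def)
qed

lemma hist_X_empty [simp]: "hist_X {} = {}"
  by (simp add: hist_X_def)

lemma hist_X_insert [simp]: "hist_X (insert (x, y) H) = insert x (hist_X H)"
  by (auto simp: hist_X_def)

lemma restrict_label_in_DtO: "(lab, \<psi>) \<in> TT \<Longrightarrow> (Some \<circ> lab) |` (UNIV - hist_X H) \<in> DtO TT H"
  unfolding DtO_def by blast

lemma inj_feat: "inj feat"
proof
  fix a b assume "feat a = feat b"
  then have "feat a (\<lambda>i. i = a) = feat b (\<lambda>i. i = a)" by simp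
  then show "a = b" by (simp add: feat_def)
qed

lemma psi_n_eq_feat: "x n \<Longrightarrow> \<not> x' n \<Longrightarrow> psi_n n x x' = Some (feat n)"
  by (simp add: psi_n_def feat_def)

lemma T_n_is_teacher: "is_teacher natPhi (T_n n)"
  by (auto simp: is_teacher_def T_n_def psi_n_def natPhi_def feat_def nfeat_def)

lemma teachers_H_range_T_n:
  "teachers_H (range T_n) {(zero_vec, False), (one_vec, True)} = range T_n"
  by (auto simp: teachers_H_def consistent_with_def T_n_def feat_def zero_vec_def one_vec_def)

lemma T_n_dff_shattered_height_one:
  "dff_shattered natPhi (range T_n) {(zero_vec, False), (one_vec, True)}
     (dfft_height_one (\<lambda>i. i = 0) {(zero_vec, False), (one_vec, True)}
        (\<lambda>l. if snd l then T_n 1 else T_n 0)) 1"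
  by (rule dff_shattered_dfft_height_one)
    (simp, simp add: teachers_H_range_T_n T_n_is_teacher, auto simp: T_n_def feat_def)

lemma T_n_dff_shattered_height_le_one:
  assumes sh: "dff_shattered natPhi (range T_n) {(zero_vec, False), (one_vec, True)} r n"
  shows "n \<le> 1"
proof (rule ccontr)
  let ?H = "{(zero_vec, False), (one_vec, True)}"
  assume "\<not> n \<le> 1"
  then have "2 \<le> n" by simp
  then obtain x c x' where x: "nX r = Some x" and x': "nX c = Some x'"
    and extend: "\<And>l\<^sub>1. l\<^sub>1 \<in> ?H \<Longrightarrow> \<exists>d q. is_path r (((zero_vec, False), c) # (l\<^sub>1, d) # q)"
    by (rule dff_shattered_two_levels[OF sh _ insertI1]) blast
  have teacher: "\<exists>a. x a \<and> nPhi c = Some (feat a) \<and> x' a = (\<not> snd l\<^sub>1)" if "l\<^sub>1 \<in> ?H" for l\<^sub>1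
  proof -
    from extend[OF that] obtain d q where p: "is_path r (((zero_vec, False), c) # (l\<^sub>1, d) # q)"
      by blast
    obtain lab \<psi> where "(lab, \<psi>) \<in> range T_n" "lab x \<noteq> False" "nPhi c = \<psi> x zero_vec"
      "lab x' \<noteq> snd l\<^sub>1"
      using dff_shattered_two_step_teacher[OF sh p x x'] teachers_H_range_T_n by auto
    then obtain a where "x a" "nPhi c = psi_n a x zero_vec" "x' a \<noteq> snd l\<^sub>1"
      by (auto simp: T_n_def feat_def)
    then show ?thesis by (auto simp: psi_n_eq_feat zero_vec_def)
  qed
  obtain a where "nPhi c = Some (feat a)" "x' a"
    using teacher[of "(zero_vec, False)"] by auto
  moreover obtain b where "nPhi c = Some (feat b)" "\<not> x' b"
    using teacher[of "(one_vec, True)"] by auto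
  ultimately show False using inj_feat by (auto dest: injD)
qed

definition binary_digit_ltree :: "(nat \<Rightarrow> bool, bool) ltree" where
  "binary_digit_ltree a = ((\<lambda>m. bit m (length a)), False, True)"

lemma ledge_binary_digit_ltree: "ledge binary_digit_ltree a b = b"
  by (simp add: ledge_def binary_digit_ltree_def)

lemma realizes_branch_binary_digit_ltree_iff:
  "realizes_branch h binary_digit_ltree bs \<longleftrightarrow> (\<forall>i < length bs. h (\<lambda>m. bit m i) = Some (bs ! i))"
  by (simp add: realizes_branch_def ledge_binary_digit_ltree binary_digit_ltree_def)

lemma binary_digit_neq_zero_vec: "(\<lambda>m. bit m i) \<noteq> zero_vec"
proof
  assume "(\<lambda>m. bit m i) = zero_vec"
  then have "bit ((2::nat) ^ i) i = zero_vec (2 ^ i)" by (rule fun_cong)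
  then show False by (simp add: zero_vec_def bit_exp_iff)
qed

lemma binary_digit_neq_one_vec: "(\<lambda>m. bit m i) \<noteq> one_vec"
proof
  assume "(\<lambda>m. bit m i) = one_vec"
  then have "bit (0::nat) i = one_vec 0" by (rule fun_cong)
  then show False by (simp add: one_vec_def)
qed

lemma ltree_shattered_inf_binary_digit_ltree:
  "ltree_shattered_inf (DtO (range T_n) {(zero_vec, False), (one_vec, True)}) binary_digit_ltree"
  unfolding ltree_shattered_inf_def
proof (intro conjI allI)
  let ?H = "{(zero_vec, False), (one_vec, True)}"
  show "fst (snd (binary_digit_ltree a)) \<noteq> snd (snd (binary_digit_ltree a))" for a
    by (simp add: binary_digit_ltree_def)
  fix bs :: "bool list"
  define m :: nat where "m = horner_sum of_bool 2 bs"
  define h where "h = (Some \<circ> feat m) |` (UNIV - hist_X ?H)"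
  have "h \<in> DtO (range T_n) ?H"
    unfolding h_def by (rule restrict_label_in_DtO[of _ "psi_n m"]) (simp add: T_n_def)
  moreover have "h (\<lambda>m. bit m i) = Some (bs ! i)" if "i < length bs" for i
    using that binary_digit_neq_zero_vec binary_digit_neq_one_vec
    by (simp add: h_def m_def feat_def bit_horner_sum_bit_iff)
  ultimately show "\<exists>h \<in> DtO (range T_n) ?H. realizes_branch h binary_digit_ltree bs"
    by (auto simp: realizes_branch_binary_digit_ltree_iff)
qed

theorem mainTheorem11:
  fixes TT :: "(nat \<Rightarrow> bool, bool) teacher set" and H :: "((nat \<Rightarrow> bool) \<times> bool) set"
  assumes "TT = range T_n"
    and "H = {(zero_vec, False), (one_vec, True)}"
  shows "DFFdim natPhi TT H = 1 \<and> Ldim (DtO TT H) = \<infinity>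
         \<and> (\<exists>t. ltree_shattered_inf (DtO TT H) t)"
proof (intro conjI exI)
  show "DFFdim natPhi TT H = 1"
    unfolding assms one_enat_def
    using T_n_dff_shattered_height_one T_n_dff_shattered_height_le_one by (rule DFFdim_eq_enatI)
  show "ltree_shattered_inf (DtO TT H) binary_digit_ltree"
    unfolding assms by (rule ltree_shattered_inf_binary_digit_ltree)
  then show "Ldim (DtO TT H) = \<infinity>" by (rule Ldim_eq_infinityI)
qed

end
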